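(* Let $p<1$, $p\neq0$. For $t\in[0,T]$ and $n\in\mathbb N$ let $\mathcal O^n_t=\{x\in\mathbb{R}^d:x^Tz\ge-1+\frac1n\ \forall z\in\mathbf S_t\}$ and define on $\mathbf S_t\times\mathcal O^n_t$ \[ \mathcal I(z,x)=\begin{cases}\dfrac{p^{-1}((1+x^Tz)^p-1)-x^Tz}{|z|^{2-\varepsilon}\wedge1},&|z|>0,\\ 0,&z=0.\end{cases} \] Then $\mathcal I$ is continuous, and there is a constant $C(n,\kappa_t)<\infty$ (depending on $n$ and $\kappa_t$) such that $\sup_{x\in\mathcal O^n_t}\sup_{z\ne\hat z\in\mathbf S_t}|\mathcal I(z,x)-\mathcal I(\hat z,x)|\le C(n,\kappa_t)|z-\hat z|^{\varepsilon\wedge1}$, $\sup_{z\in\mathbf S_t}\sup_{x\ne\hat x\in\mathcal O^n_t}|\mathcal I(z,x)-\mathcal I(z,\hat x)|\le C(n,\kappa_t)|x-\hat x|$, and $\sup_{(z,x)\in\mathbf S_t\times\mathcal O^n_t}|\mathcal I(z,x)|\le C(n,\kappa_t)$.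
   Context: Fix $T>0$, $d\ge1$, $\varepsilon\in(0,2]$. Let $\mathbb{S}^d_+$ be the symmetric positive definite $d\times d$ matrices, $\mathcal L$ the Lévy measures on $\mathbb{R}^d$, with $d^\varepsilon_{\mathcal L}(\mu,\nu)=\sup\int f\,d(\tilde\mu-\tilde\nu)$, $\tilde\mu(A)=\int_A(|z|^{2-\varepsilon}\wedge1)\mu(dz)$, sup over bounded continuous $f$ with $\sup_{z\neq\hat z}[|f(z)|\vee|f(z)-f(\hat z)|/|z-\hat z|^{\varepsilon\wedge1}]\le1$. $\mathcal C\subset\mathbb{R}^d\times\mathbb{S}^d_+\times\mathcal L$ is compact for $d_{\mathcal C}=|y-\hat y|\vee\|M-\hat M\|_2\vee d^\varepsilon_{\mathcal L}(\mu,\hat\mu)$; $\Theta:[0,T]\twoheadrightarrow\mathcal C$ is a weakly measurable correspondence with closed convex values. Assume $\mathbf S_t=\bigcup_{(y,M,\mu)\in\Theta_t}\mathrm{supp}(\mu)$ is closed, there is $\kappa_t>0$ with $\{|z|\le\kappa_t^{-1}\}\subseteq\mathrm{Conv}(\mathbf S_t\cup\{0\})\subseteq\{|z|\le\kappa_t\}$, and $|y|\vee\|M\|_2\vee d^\varepsilon_{\mathcal L}(\mu,0)\le\kappa_t$ for all $(y,M,\mu)\in\Theta_t$. *)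

theory Defs
  imports "HOL-Analysis.Analysis"
begin

definition Oset :: "'a::euclidean_space set \<Rightarrow> nat \<Rightarrow> 'a set" where
  "Oset S n = {x. \<forall>z\<in>S. inner x z \<ge> -1 + 1 / real n}"

text \<open>The integrand I(z,x); on S x O^n we have 1 + x^T z >= 1/n > 0.\<close>
definition Ifun :: "real \<Rightarrow> real \<Rightarrow> 'a::euclidean_space \<Rightarrow> 'a \<Rightarrow> real" where
  "Ifun p \<epsilon> z x =
     (if z = 0 then 0
      else (((1 + inner x z) powr p - 1) / p - inner x z) / min (norm z powr (2 - \<epsilon>)) 1)"

end

theory Submission
  imports Defs
begin

(* With u = x^T z the numerator of I is the Bernoulli gap g(u) = ((1 + u)^p - 1)/p - u. It is
   nonpositive, vanishes to second order at 0, and |g''| <= (1 - p) n^(2 - p) where 1 + u >= 1/n.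
   On S_t x O^n_t both |z| and |x| are at most kappa (for x by polarity against the ball of
   radius 1/kappa in the hull), so |g(x^T z)| <= C |z|^2; this absorbs the division by
   min(|z|^(2 - eps), 1) and gives the bound and the Lipschitz estimate in x. Since g <= 0,
   I = min(g |z|^(eps - 2), g). The second term is Lipschitz in z; the first is Hoelder of order
   min(eps, 1): if |z| <= 2 |z - z'| both values are small, otherwise |z| and |z'| are comparable
   and the mean value theorem applies to r^(eps - 2). Joint continuity follows from the two
   uniform one-sided moduli. *)

lemma abs_powr_diff_le:
  fixes a c r r' :: real
  assumes "0 < c" "c \<le> r" "c \<le> r'" "a \<le> 1"
  shows "\<bar>r powr a - r' powr a\<bar> \<le> \<bar>a\<bar> * c powr (a - 1) * \<bar>r - r'\<bar>"
proof -
  have "norm (r powr a - r' powr a) \<le> \<bar>a\<bar> * c powr (a - 1) * norm (r - r')"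
  proof (rule field_differentiable_bound[where S = "{c..}"])
    fix s assume s: "s \<in> {c..}"
    then have "0 < s" using assms by auto
    then show "((\<lambda>s. s powr a) has_field_derivative a * s powr (a - 1)) (at s within {c..})"
      by (intro has_field_derivative_at_within[OF has_real_derivative_powr])
    have "s powr (a - 1) \<le> c powr (a - 1)"
      using s assms by (intro powr_mono2') auto
    then show "norm (a * s powr (a - 1)) \<le> \<bar>a\<bar> * c powr (a - 1)"
      by (simp add: abs_mult mult_left_mono)
  qed (use assms in auto)
  then show ?thesis by simp
qed

lemma powr_le_bound:
  fixes a r K :: real
  assumes "0 \<le> r" "r \<le> K" "1 \<le> K" "0 \<le> a" "a \<le> 1"
  shows "r powr a \<le> K"
proof -
  have "r powr a \<le> K powr a" using assms by (intro powr_mono2) auto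
  also have "\<dots> \<le> K powr 1" using assms by (intro powr_mono) auto
  finally show ?thesis using assms by simp
qed

lemma powr_mult_le_bound_powr_min:
  fixes \<delta> r K \<epsilon> :: real
  assumes "0 \<le> \<delta>" "\<delta> \<le> r" "r \<le> K" "1 \<le> K" "0 < \<epsilon>" "\<epsilon> \<le> 2"
  shows "r powr (\<epsilon> - 1) * \<delta> \<le> K * \<delta> powr min \<epsilon> 1"
proof (cases "\<delta> = 0")
  case False
  let ?\<alpha> = "min \<epsilon> 1"
  have "r powr (\<epsilon> - 1) * \<delta> = r powr (\<epsilon> - ?\<alpha>) * (r powr (?\<alpha> - 1) * \<delta>)"
    by (simp add: powr_add[symmetric])
  also have "\<dots> \<le> K * (\<delta> powr (?\<alpha> - 1) * \<delta>)"
  proof (rule mult_mono)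
    show "r powr (\<epsilon> - ?\<alpha>) \<le> K" using assms by (intro powr_le_bound) auto
    show "r powr (?\<alpha> - 1) * \<delta> \<le> \<delta> powr (?\<alpha> - 1) * \<delta>"
      using assms False by (intro mult_right_mono powr_mono2') auto
  qed (use assms in auto)
  also have "\<dots> = K * \<delta> powr ?\<alpha>"
    using powr_mult_base[of \<delta> "?\<alpha> - 1"] assms False by (simp add: mult.commute)
  finally show ?thesis .
qed simp

lemma power2_le_mult_min_powr:
  fixes r K \<epsilon> :: real
  assumes "0 \<le> r" "r \<le> K" "1 \<le> K" "0 < \<epsilon>" "\<epsilon> \<le> 2"
  shows "r\<^sup>2 \<le> K\<^sup>2 * min (r powr (2 - \<epsilon>)) 1"
proof (cases "r powr (2 - \<epsilon>) \<le> 1")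
  case True
  have "r powr \<epsilon> \<le> K powr \<epsilon>" using assms by (intro powr_mono2) auto
  also have "\<dots> \<le> K powr 2" using assms by (intro powr_mono) auto
  finally have "r powr \<epsilon> \<le> K\<^sup>2" using assms by simp
  moreover have "r\<^sup>2 = r powr \<epsilon> * r powr (2 - \<epsilon>)"
    using assms by (simp add: powr_add[symmetric])
  ultimately show ?thesis using True by (simp add: min_def mult_right_mono)
next
  case False
  then show ?thesis using assms by (simp add: min_def power_mono)
qed

lemma abs_inner_le_bound:
  fixes x z :: "'a::real_inner"
  assumes "norm x \<le> K"
  shows "\<bar>inner x z\<bar> \<le> K * norm z"
  using Cauchy_Schwarz_ineq2[of x z] mult_right_mono[OF assms norm_ge_zero[of z]] by linarith

lemma power2_inner_le_bound:
  fixes x z :: "'a::real_inner"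
  assumes "norm x \<le> K"
  shows "(inner x z)\<^sup>2 \<le> K\<^sup>2 * (norm z)\<^sup>2"
  using power_mono[OF abs_inner_le_bound[OF assms, of z] abs_ge_zero, where n = 2]
  by (simp add: power_mult_distrib)

lemma norm_le_of_cball_subset_hull:
  fixes x :: "'a::real_inner"
  assumes "cball 0 r \<subseteq> convex hull (S \<union> {0})" "0 < r" "\<forall>z\<in>S. -1 \<le> inner x z"
  shows "r * norm x \<le> 1"
proof (cases "x = 0")
  case False
  define w where "w = - (r / norm x) *\<^sub>R x"
  have "convex hull (S \<union> {0}) \<subseteq> {w. -1 \<le> inner x w}"
    using assms(3) by (intro hull_minimal) (auto simp: convex_halfspace_ge)
  moreover have "w \<in> cball 0 r" using False assms(2) by (simp add: w_def)
  ultimately have "-1 \<le> inner x w" using assms(1) by auto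
  moreover have "inner x w = - (r * norm x)"
    using False by (simp add: w_def power2_norm_eq_inner[symmetric] power2_eq_square)
  ultimately show ?thesis by simp
qed simp

lemma continuous_on_Times_holder_lipschitz:
  fixes f :: "'a::metric_space \<times> 'b::metric_space \<Rightarrow> real"
  assumes holder: "\<And>a a' b. a \<in> A \<Longrightarrow> a' \<in> A \<Longrightarrow> b \<in> B \<Longrightarrow>
      \<bar>f (a, b) - f (a', b)\<bar> \<le> C * dist a a' powr \<alpha>"
    and lipschitz: "\<And>a b b'. a \<in> A \<Longrightarrow> b \<in> B \<Longrightarrow> b' \<in> B \<Longrightarrow>
      \<bar>f (a, b) - f (a, b')\<bar> \<le> C * dist b b'"
    and "0 < \<alpha>"
  shows "continuous_on (A \<times> B) f"
  unfolding continuous_on_def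
proof (intro ballI)
  fix y assume y: "y \<in> A \<times> B"
  let ?F = "at y within A \<times> B"
  let ?\<omega> = "\<lambda>y'. C * dist (fst y') (fst y) powr \<alpha> + C * dist (snd y') (snd y)"
  have "(?\<omega> \<longlongrightarrow> 0) ?F"
    using \<open>0 < \<alpha>\<close>
    by (auto intro!: tendsto_eq_intros tendsto_zero_powrI tendsto_dist_iff[THEN iffD1])
  moreover have "norm (dist (f y') (f y)) \<le> ?\<omega> y'" if "y' \<in> A \<times> B" for y'
  proof -
    have "\<bar>f y' - f y\<bar>
        \<le> \<bar>f (fst y', snd y') - f (fst y, snd y')\<bar> + \<bar>f (fst y, snd y') - f (fst y, snd y)\<bar>"
      by simp
    also have "\<dots> \<le> ?\<omega> y'"
      using that y by (intro add_mono holder lipschitz) auto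
    finally show ?thesis by (simp add: dist_real_def)
  qed
  then have "\<forall>\<^sub>F y' in ?F. norm (dist (f y') (f y)) \<le> ?\<omega> y'"
    by (auto simp: eventually_at_filter)
  ultimately show "(f \<longlongrightarrow> f y) ?F"
    by (subst tendsto_dist_iff) (rule Lim_null_comparison)
qed

definition bernoulli_gap :: "real \<Rightarrow> real \<Rightarrow> real" where
  "bernoulli_gap p u = ((1 + u) powr p - 1) / p - u"

lemma bernoulli_gap_0 [simp]: "bernoulli_gap p 0 = 0"
  by (simp add: bernoulli_gap_def)

lemma has_real_derivative_bernoulli_gap:
  assumes "p \<noteq> 0" "0 < 1 + s"
  shows "(bernoulli_gap p has_real_derivative (1 + s) powr (p - 1) - 1) (at s)"
  unfolding bernoulli_gap_def[abs_def] using assms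
  by (auto intro!: derivative_eq_intros simp: field_simps)

lemma bernoulli_gap_nonpos:
  assumes "p < 1" "p \<noteq> 0" "0 < 1 + u"
  shows "bernoulli_gap p u \<le> 0"
proof (cases "0 \<le> u")
  case True
  have "bernoulli_gap p u \<le> bernoulli_gap p 0"
  proof (rule DERIV_nonpos_imp_nonincreasing[OF True])
    fix s :: real assume "0 \<le> s"
    moreover have "(1 + s) powr (p - 1) \<le> 1 powr (p - 1)"
      using \<open>0 \<le> s\<close> assms by (intro powr_mono2') auto
    ultimately show "\<exists>y. DERIV (bernoulli_gap p) s :> y \<and> y \<le> 0"
      using assms has_real_derivative_bernoulli_gap[of p s] by auto
  qed
  then show ?thesis by simp
next
  case False
  have "bernoulli_gap p u \<le> bernoulli_gap p 0"
  proof (rule DERIV_nonneg_imp_nondecreasing[of u 0])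
    fix s :: real assume "u \<le> s" "s \<le> 0"
    moreover have "1 powr (p - 1) \<le> (1 + s) powr (p - 1)"
      using \<open>u \<le> s\<close> \<open>s \<le> 0\<close> assms by (intro powr_mono2') auto
    ultimately show "\<exists>y. DERIV (bernoulli_gap p) s :> y \<and> y \<ge> 0"
      using assms has_real_derivative_bernoulli_gap[of p s] by auto
  qed (use False in auto)
  then show ?thesis by simp
qed

context
  fixes p c :: real
  assumes p: "p < 1" "p \<noteq> 0" and c: "0 < c" "c \<le> 1"
begin

lemma bernoulli_gap_deriv_bound:
  assumes "c \<le> 1 + s"
  shows "\<bar>(1 + s) powr (p - 1) - 1\<bar> \<le> (1 - p) * c powr (p - 2) * \<bar>s\<bar>"
proof -
  have "\<bar>(1 + s) powr (p - 1) - 1 powr (p - 1)\<bar> \<le> \<bar>p - 1\<bar> * c powr (p - 1 - 1) * \<bar>(1 + s) - 1\<bar>"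
    using assms p c by (intro abs_powr_diff_le) auto
  moreover have "\<bar>p - 1\<bar> = 1 - p" "p - 1 - 1 = p - 2" using p by auto
  ultimately show ?thesis by simp
qed

lemma bernoulli_gap_lipschitz:
  assumes "c \<le> 1 + u" "c \<le> 1 + v"
  shows "\<bar>bernoulli_gap p v - bernoulli_gap p u\<bar>
    \<le> (1 - p) * c powr (p - 2) * max \<bar>u\<bar> \<bar>v\<bar> * \<bar>v - u\<bar>"
proof -
  let ?S = "{min u v..max u v}"
  let ?M = "(1 - p) * c powr (p - 2)"
  have "norm (bernoulli_gap p v - bernoulli_gap p u) \<le> ?M * max \<bar>u\<bar> \<bar>v\<bar> * norm (v - u)"
  proof (rule field_differentiable_bound[where S = ?S])
    fix s assume s: "s \<in> ?S"
    then have "c \<le> 1 + s" using assms by (auto simp: min_def split: if_splits)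
    then show "(bernoulli_gap p has_field_derivative (1 + s) powr (p - 1) - 1) (at s within ?S)"
      using p c by (intro has_field_derivative_at_within[OF has_real_derivative_bernoulli_gap]) auto
    have "\<bar>(1 + s) powr (p - 1) - 1\<bar> \<le> ?M * \<bar>s\<bar>"
      using \<open>c \<le> 1 + s\<close> by (rule bernoulli_gap_deriv_bound)
    also have "\<dots> \<le> ?M * max \<bar>u\<bar> \<bar>v\<bar>"
      using s p by (intro mult_left_mono) (auto simp: abs_le_iff max_def min_def split: if_splits)
    finally show "norm ((1 + s) powr (p - 1) - 1) \<le> ?M * max \<bar>u\<bar> \<bar>v\<bar>"
      by (simp only: real_norm_def)
  qed (auto simp: convex_real_interval)
  then show ?thesis by (simp only: real_norm_def)
qed

lemma bernoulli_gap_quadratic_bound: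
  assumes "c \<le> 1 + u"
  shows "\<bar>bernoulli_gap p u\<bar> \<le> (1 - p) * c powr (p - 2) * u\<^sup>2"
  using bernoulli_gap_lipschitz[of 0 u] assms c
  by (simp add: power2_eq_square abs_mult_self_eq)

lemma bernoulli_gap_inner_abs_le:
  fixes x z :: "'a::real_inner"
  assumes "norm x \<le> K" "c \<le> 1 + inner x z"
  shows "\<bar>bernoulli_gap p (inner x z)\<bar> \<le> (1 - p) * c powr (p - 2) * K\<^sup>2 * (norm z)\<^sup>2"
proof -
  have "\<bar>bernoulli_gap p (inner x z)\<bar> \<le> (1 - p) * c powr (p - 2) * (inner x z)\<^sup>2"
    using assms(2) by (rule bernoulli_gap_quadratic_bound)
  also have "\<dots> \<le> (1 - p) * c powr (p - 2) * (K\<^sup>2 * (norm z)\<^sup>2)"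
    using power2_inner_le_bound[OF assms(1)] p by (intro mult_left_mono) auto
  finally show ?thesis by (simp add: mult.assoc)
qed

lemma bernoulli_gap_inner_diff_le:
  fixes x z z' :: "'a::real_inner"
  assumes "norm x \<le> K" "c \<le> 1 + inner x z" "c \<le> 1 + inner x z'"
  shows "\<bar>bernoulli_gap p (inner x z) - bernoulli_gap p (inner x z')\<bar>
    \<le> (1 - p) * c powr (p - 2) * K\<^sup>2 * max (norm z) (norm z') * dist z z'"
proof -
  let ?M = "(1 - p) * c powr (p - 2)"
  have K: "0 \<le> K" using norm_ge_zero[of x] assms(1) by linarith
  have "\<bar>bernoulli_gap p (inner x z) - bernoulli_gap p (inner x z')\<bar>
      \<le> ?M * max \<bar>inner x z'\<bar> \<bar>inner x z\<bar> * \<bar>inner x z - inner x z'\<bar>"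
    using assms(3,2) by (rule bernoulli_gap_lipschitz)
  also have "\<dots> \<le> ?M * (K * max (norm z) (norm z')) * (K * dist z z')"
  proof (intro mult_mono mult_left_mono)
    have "K * norm z \<le> K * max (norm z) (norm z')" "K * norm z' \<le> K * max (norm z) (norm z')"
      using K by (auto intro: mult_left_mono)
    then show "max \<bar>inner x z'\<bar> \<bar>inner x z\<bar> \<le> K * max (norm z) (norm z')"
      using abs_inner_le_bound[OF assms(1), of z] abs_inner_le_bound[OF assms(1), of z'] by simp
    show "\<bar>inner x z - inner x z'\<bar> \<le> K * dist z z'"
      using abs_inner_le_bound[OF assms(1), of "z - z'"] by (simp add: inner_diff_right dist_norm)
  qed (use p K in \<open>auto intro!: mult_nonneg_nonneg simp: le_max_iff_disj\<close>)
  finally show ?thesis by (simp add: power2_eq_square mult_ac)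
qed

end

lemma Ifun_eq_bernoulli_gap:
  "z \<noteq> 0 \<Longrightarrow> Ifun p \<epsilon> z x = bernoulli_gap p (inner x z) / min (norm z powr (2 - \<epsilon>)) 1"
  by (simp add: Ifun_def bernoulli_gap_def)

lemma Ifun_eq_min:
  assumes "p < 1" "p \<noteq> 0" "0 < 1 + inner x z"
  shows "Ifun p \<epsilon> z x =
    min (bernoulli_gap p (inner x z) * norm z powr (\<epsilon> - 2)) (bernoulli_gap p (inner x z))"
proof (cases "z = 0")
  case False
  define F where "F = bernoulli_gap p (inner x z)"
  define a where "a = norm z powr (2 - \<epsilon>)"
  have "F \<le> 0" unfolding F_def using assms by (rule bernoulli_gap_nonpos)
  moreover have "0 < a" using False by (simp add: a_def)
  moreover have "norm z powr (\<epsilon> - 2) = 1 / a"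
    by (simp add: a_def powr_minus_divide[symmetric])
  moreover have "F / min a 1 = min (F / a) F" if "F \<le> 0" "0 < a"
  proof (cases "a \<le> 1")
    case True
    then have "F / a \<le> F" using that mult_left_mono_neg[of a 1 F] by (simp add: divide_le_eq)
    then show ?thesis using True by (simp add: min_def)
  next
    case False
    then have "F \<le> F / a" using that mult_left_mono_neg[of 1 a F] by (simp add: le_divide_eq)
    then show ?thesis using False by (simp add: min_def)
  qed
  ultimately show ?thesis
    using False by (simp add: Ifun_eq_bernoulli_gap F_def[symmetric] a_def[symmetric])
qed (simp add: Ifun_def)

context
  fixes p c \<epsilon> K :: real
  assumes p: "p < 1" "p \<noteq> 0" and c: "0 < c" "c \<le> 1"
    and \<epsilon>: "0 < \<epsilon>" "\<epsilon> \<le> 2" and K: "1 \<le> K"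
begin

lemma Ifun_abs_le:
  fixes x z :: "'a::euclidean_space"
  assumes "norm x \<le> K" "norm z \<le> K" "c \<le> 1 + inner x z"
  shows "\<bar>Ifun p \<epsilon> z x\<bar> \<le> (1 - p) * c powr (p - 2) * K ^ 4"
proof (cases "z = 0")
  case False
  let ?M = "(1 - p) * c powr (p - 2)"
  let ?m = "min (norm z powr (2 - \<epsilon>)) 1"
  have "\<bar>bernoulli_gap p (inner x z)\<bar> \<le> ?M * K\<^sup>2 * (norm z)\<^sup>2"
    using p c assms(1,3) by (rule bernoulli_gap_inner_abs_le)
  also have "\<dots> \<le> ?M * K\<^sup>2 * (K\<^sup>2 * ?m)"
    using power2_le_mult_min_powr[of "norm z" K \<epsilon>] assms(2) K \<epsilon> p
    by (intro mult_left_mono) auto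
  finally have "\<bar>bernoulli_gap p (inner x z)\<bar> \<le> ?M * K ^ 4 * ?m"
    by (simp add: power_numeral_reduce mult_ac)
  moreover have "0 < ?m" using False by simp
  ultimately show ?thesis
    using False by (simp add: Ifun_eq_bernoulli_gap abs_divide pos_divide_le_eq)
qed (use p c K in \<open>simp add: Ifun_def\<close>)

lemma Ifun_lipschitz_x:
  fixes x x' z :: "'a::euclidean_space"
  assumes "norm x \<le> K" "norm x' \<le> K" "norm z \<le> K"
    and "c \<le> 1 + inner x z" "c \<le> 1 + inner x' z"
  shows "\<bar>Ifun p \<epsilon> z x - Ifun p \<epsilon> z x'\<bar> \<le> (1 - p) * c powr (p - 2) * K ^ 3 * dist x x'"
proof (cases "z = 0")
  case False
  let ?M = "(1 - p) * c powr (p - 2)"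
  let ?m = "min (norm z powr (2 - \<epsilon>)) 1"
  have M: "0 \<le> ?M" using p by simp
  have "\<bar>bernoulli_gap p (inner x z) - bernoulli_gap p (inner x' z)\<bar>
      \<le> ?M * max \<bar>inner x' z\<bar> \<bar>inner x z\<bar> * \<bar>inner x z - inner x' z\<bar>"
    using p c assms(5,4) by (rule bernoulli_gap_lipschitz)
  also have "\<dots> \<le> ?M * (K * norm z) * (norm z * dist x x')"
  proof (intro mult_mono mult_left_mono M)
    show "max \<bar>inner x' z\<bar> \<bar>inner x z\<bar> \<le> K * norm z"
      using abs_inner_le_bound[OF assms(1), of z] abs_inner_le_bound[OF assms(2), of z] by simp
    show "\<bar>inner x z - inner x' z\<bar> \<le> norm z * dist x x'"
      using Cauchy_Schwarz_ineq2[of "x - x'" z] by (simp add: inner_diff_left dist_norm mult.commute)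
  qed (use K p in auto)
  also have "\<dots> = ?M * K * dist x x' * (norm z)\<^sup>2" by (simp add: power2_eq_square mult_ac)
  also have "\<dots> \<le> ?M * K * dist x x' * (K\<^sup>2 * ?m)"
    using power2_le_mult_min_powr[of "norm z" K \<epsilon>] assms(3) M K \<epsilon> by (intro mult_left_mono) auto
  finally have "\<bar>bernoulli_gap p (inner x z) - bernoulli_gap p (inner x' z)\<bar>
      \<le> ?M * K ^ 3 * dist x x' * ?m"
    by (simp add: power_numeral_reduce mult_ac)
  moreover have "0 < ?m" using False by simp
  ultimately show ?thesis
    using False
    by (simp add: Ifun_eq_bernoulli_gap diff_divide_distrib[symmetric] abs_divide pos_divide_le_eq)
qed (use p c K in \<open>simp add: Ifun_def\<close>)

lemma abs_bernoulli_gap_mult_powr_le: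
  fixes x z :: "'a::euclidean_space"
  assumes "norm x \<le> K" "c \<le> 1 + inner x z"
  shows "\<bar>bernoulli_gap p (inner x z) * norm z powr (\<epsilon> - 2)\<bar>
    \<le> (1 - p) * c powr (p - 2) * K\<^sup>2 * norm z powr \<epsilon>"
proof -
  let ?M = "(1 - p) * c powr (p - 2)"
  have "\<bar>bernoulli_gap p (inner x z)\<bar> * norm z powr (\<epsilon> - 2)
      \<le> ?M * K\<^sup>2 * (norm z)\<^sup>2 * norm z powr (\<epsilon> - 2)"
    using bernoulli_gap_inner_abs_le[OF p c assms] by (rule mult_right_mono) simp
  also have "\<dots> = ?M * K\<^sup>2 * ((norm z)\<^sup>2 * norm z powr (\<epsilon> - 2))"
    by (simp only: mult_ac)
  also have "(norm z)\<^sup>2 * norm z powr (\<epsilon> - 2) = norm z powr \<epsilon>"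
    by (cases "z = 0") (simp_all add: powr_add[symmetric] flip: powr_numeral)
  finally show ?thesis by (simp add: abs_mult)
qed

lemma bernoulli_gap_mult_powr_holder_near:
  fixes x z z' :: "'a::euclidean_space"
  assumes "norm x \<le> K" "norm z \<le> K" "norm z' \<le> norm z" "norm z \<le> 2 * dist z z'"
    and "c \<le> 1 + inner x z" "c \<le> 1 + inner x z'"
  shows "\<bar>bernoulli_gap p (inner x z) * norm z powr (\<epsilon> - 2)
      - bernoulli_gap p (inner x z') * norm z' powr (\<epsilon> - 2)\<bar>
    \<le> 4 * ((1 - p) * c powr (p - 2)) * K ^ 3 * dist z z' powr min \<epsilon> 1"
proof -
  let ?M = "(1 - p) * c powr (p - 2)"
  let ?\<alpha> = "min \<epsilon> 1"
  have small: "r powr \<epsilon> \<le> 2 * K * dist z z' powr ?\<alpha>" if "0 \<le> r" "r \<le> norm z" for r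
  proof -
    have "r powr (\<epsilon> - ?\<alpha>) \<le> K"
      using that assms(2) K \<epsilon> by (intro powr_le_bound) auto
    moreover have "r powr ?\<alpha> \<le> 2 * dist z z' powr ?\<alpha>"
    proof -
      have "r powr ?\<alpha> \<le> (2 * dist z z') powr ?\<alpha>"
        using that assms(4) \<epsilon> by (intro powr_mono2) auto
      also have "\<dots> = 2 powr ?\<alpha> * dist z z' powr ?\<alpha>"
        by (simp add: powr_mult)
      also have "\<dots> \<le> 2 powr 1 * dist z z' powr ?\<alpha>"
        by (intro mult_right_mono powr_mono) auto
      finally show ?thesis by simp
    qed
    ultimately have "r powr (\<epsilon> - ?\<alpha>) * r powr ?\<alpha> \<le> K * (2 * dist z z' powr ?\<alpha>)"
      using K by (intro mult_mono) auto
    then show ?thesis by (simp add: powr_add[symmetric])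
  qed
  have "\<bar>bernoulli_gap p (inner x z) * norm z powr (\<epsilon> - 2)
      - bernoulli_gap p (inner x z') * norm z' powr (\<epsilon> - 2)\<bar>
      \<le> ?M * K\<^sup>2 * norm z powr \<epsilon> + ?M * K\<^sup>2 * norm z' powr \<epsilon>"
    using abs_bernoulli_gap_mult_powr_le[OF assms(1,5)] abs_bernoulli_gap_mult_powr_le[OF assms(1,6)]
    by linarith
  also have "\<dots> \<le> ?M * K\<^sup>2 * (2 * K * dist z z' powr ?\<alpha>) + ?M * K\<^sup>2 * (2 * K * dist z z' powr ?\<alpha>)"
    using small[of "norm z"] small[of "norm z'"] assms(3) p by (intro add_mono mult_left_mono) auto
  finally show ?thesis by (simp add: power_numeral_reduce algebra_simps)
qed

lemma bernoulli_gap_mult_powr_holder_far: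
  fixes x z z' :: "'a::euclidean_space"
  assumes "norm x \<le> K" "norm z \<le> K" "norm z' \<le> norm z" "2 * dist z z' < norm z"
    and "c \<le> 1 + inner x z" "c \<le> 1 + inner x z'"
  shows "\<bar>bernoulli_gap p (inner x z) * norm z powr (\<epsilon> - 2)
      - bernoulli_gap p (inner x z') * norm z' powr (\<epsilon> - 2)\<bar>
    \<le> 3 * ((1 - p) * c powr (p - 2)) * K ^ 3 * dist z z' powr min \<epsilon> 1"
proof -
  let ?M = "(1 - p) * c powr (p - 2)"
  let ?\<alpha> = "min \<epsilon> 1"
  define r r' \<delta> where "r = norm z" and "r' = norm z'" and "\<delta> = dist z z'"
  define F F' where "F = bernoulli_gap p (inner x z)" and "F' = bernoulli_gap p (inner x z')"
  have M: "0 \<le> ?M" using p by simp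
  have "\<bar>r - r'\<bar> \<le> \<delta>"
    unfolding r_def r'_def \<delta>_def dist_norm by (rule norm_triangle_ineq3)
  then have r: "\<delta> < r'" "r' \<le> r" "r \<le> K" "0 \<le> \<delta>"
    using assms(2-4) by (auto simp: r_def r'_def \<delta>_def)
  have dF: "\<bar>F - F'\<bar> \<le> ?M * K\<^sup>2 * r * \<delta>"
    using bernoulli_gap_inner_diff_le[OF p c assms(1,5,6)] r
    by (simp add: F_def F'_def r_def r'_def \<delta>_def max_def)
  have F': "\<bar>F'\<bar> \<le> ?M * K\<^sup>2 * r'\<^sup>2"
    unfolding F'_def r'_def using p c assms(1,6) by (rule bernoulli_gap_inner_abs_le)
  have "\<bar>r powr (\<epsilon> - 2) - r' powr (\<epsilon> - 2)\<bar> \<le> \<bar>\<epsilon> - 2\<bar> * r' powr (\<epsilon> - 2 - 1) * \<bar>r - r'\<bar>"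
    using r \<epsilon> by (intro abs_powr_diff_le) auto
  also have "\<dots> \<le> 2 * r' powr (\<epsilon> - 3) * \<delta>"
    using \<open>\<bar>r - r'\<bar> \<le> \<delta>\<close> \<epsilon> by (intro mult_mono) auto
  finally have dP: "\<bar>r powr (\<epsilon> - 2) - r' powr (\<epsilon> - 2)\<bar> \<le> 2 * r' powr (\<epsilon> - 3) * \<delta>" .
  have "\<bar>F * r powr (\<epsilon> - 2) - F' * r' powr (\<epsilon> - 2)\<bar>
      = \<bar>(F - F') * r powr (\<epsilon> - 2) + F' * (r powr (\<epsilon> - 2) - r' powr (\<epsilon> - 2))\<bar>"
    by (simp add: algebra_simps)
  also have "\<dots> \<le> \<bar>F - F'\<bar> * r powr (\<epsilon> - 2) + \<bar>F'\<bar> * \<bar>r powr (\<epsilon> - 2) - r' powr (\<epsilon> - 2)\<bar>"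
    by (simp add: abs_mult abs_triangle_ineq[THEN order_trans])
  also have "\<dots> \<le> ?M * K\<^sup>2 * r * \<delta> * r powr (\<epsilon> - 2) + ?M * K\<^sup>2 * r'\<^sup>2 * (2 * r' powr (\<epsilon> - 3) * \<delta>)"
    using dF F' dP by (intro add_mono mult_mono) auto
  also have "\<dots> = ?M * K\<^sup>2 * ((r * r powr (\<epsilon> - 2)) * \<delta>)
      + 2 * ?M * K\<^sup>2 * ((r'\<^sup>2 * r' powr (\<epsilon> - 3)) * \<delta>)"
    by (simp only: mult_ac)
  also have "\<dots> = ?M * K\<^sup>2 * (r powr (\<epsilon> - 1) * \<delta>) + 2 * ?M * K\<^sup>2 * (r' powr (\<epsilon> - 1) * \<delta>)"
    using powr_mult_base[of r "\<epsilon> - 2"] powr_add[of r' 2 "\<epsilon> - 3"] r by (simp flip: powr_numeral)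
  also have "\<dots> \<le> ?M * K\<^sup>2 * (K * \<delta> powr ?\<alpha>) + 2 * ?M * K\<^sup>2 * (K * \<delta> powr ?\<alpha>)"
    using r K \<epsilon> M by (intro add_mono mult_left_mono powr_mult_le_bound_powr_min) auto
  also have "\<dots> = 3 * ?M * K ^ 3 * \<delta> powr ?\<alpha>"
    by (simp add: power_numeral_reduce algebra_simps)
  finally show ?thesis by (simp only: F_def F'_def r_def r'_def \<delta>_def)
qed

lemma bernoulli_gap_mult_powr_holder:
  fixes x z z' :: "'a::euclidean_space"
  assumes "norm x \<le> K" "norm z \<le> K" "norm z' \<le> K"
    and "c \<le> 1 + inner x z" "c \<le> 1 + inner x z'"
  shows "\<bar>bernoulli_gap p (inner x z) * norm z powr (\<epsilon> - 2)
      - bernoulli_gap p (inner x z') * norm z' powr (\<epsilon> - 2)\<bar>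
    \<le> 4 * ((1 - p) * c powr (p - 2)) * K ^ 3 * dist z z' powr min \<epsilon> 1"
proof -
  have ordered: "\<bar>bernoulli_gap p (inner x a) * norm a powr (\<epsilon> - 2)
      - bernoulli_gap p (inner x b) * norm b powr (\<epsilon> - 2)\<bar>
    \<le> 4 * ((1 - p) * c powr (p - 2)) * K ^ 3 * dist a b powr min \<epsilon> 1"
    if "norm b \<le> norm a" "norm a \<le> K" "c \<le> 1 + inner x a" "c \<le> 1 + inner x b" for a b :: 'a
  proof (cases "norm a \<le> 2 * dist a b")
    case True
    then show ?thesis
      using that assms(1) by (intro bernoulli_gap_mult_powr_holder_near) auto
  next
    case False
    have "0 \<le> (1 - p) * c powr (p - 2) * K ^ 3 * dist a b powr min \<epsilon> 1"
      using p K by simp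
    then show ?thesis
      using bernoulli_gap_mult_powr_holder_far[of x a b] that assms(1) False by linarith
  qed
  show ?thesis
  proof (cases "norm z' \<le> norm z")
    case True
    then show ?thesis using assms by (intro ordered) auto
  next
    case False
    then have "\<bar>bernoulli_gap p (inner x z') * norm z' powr (\<epsilon> - 2)
        - bernoulli_gap p (inner x z) * norm z powr (\<epsilon> - 2)\<bar>
      \<le> 4 * ((1 - p) * c powr (p - 2)) * K ^ 3 * dist z' z powr min \<epsilon> 1"
      using assms by (intro ordered) auto
    then show ?thesis by (simp add: abs_minus_commute dist_commute)
  qed
qed

lemma Ifun_holder_z:
  fixes x z z' :: "'a::euclidean_space"
  assumes "norm x \<le> K" "norm z \<le> K" "norm z' \<le> K"
    and "c \<le> 1 + inner x z" "c \<le> 1 + inner x z'"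
  shows "\<bar>Ifun p \<epsilon> z x - Ifun p \<epsilon> z' x\<bar>
    \<le> 6 * ((1 - p) * c powr (p - 2)) * K ^ 4 * dist z z' powr min \<epsilon> 1"
proof -
  let ?M = "(1 - p) * c powr (p - 2)"
  let ?\<alpha> = "min \<epsilon> 1"
  let ?\<delta> = "dist z z'"
  have M: "0 \<le> ?M" using p by simp
  have "?\<delta> \<le> 2 * K"
    using norm_triangle_ineq4[of z z'] assms(2,3) by (simp add: dist_norm)
  then have "?\<delta> powr (1 - ?\<alpha>) * ?\<delta> powr ?\<alpha> \<le> (2 * K) * ?\<delta> powr ?\<alpha>"
    using K \<epsilon> by (intro mult_right_mono powr_le_bound) auto
  then have \<delta>: "?\<delta> \<le> 2 * K * ?\<delta> powr ?\<alpha>"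
    by (simp add: powr_add[symmetric])
  have "\<bar>bernoulli_gap p (inner x z) - bernoulli_gap p (inner x z')\<bar>
      \<le> ?M * K\<^sup>2 * max (norm z) (norm z') * ?\<delta>"
    using p c assms(1,4,5) by (rule bernoulli_gap_inner_diff_le)
  also have "\<dots> \<le> ?M * K\<^sup>2 * K * (2 * K * ?\<delta> powr ?\<alpha>)"
    using assms(2,3) \<delta> M K by (intro mult_mono mult_left_mono) auto
  finally have gap: "\<bar>bernoulli_gap p (inner x z) - bernoulli_gap p (inner x z')\<bar>
      \<le> 2 * ?M * K ^ 4 * ?\<delta> powr ?\<alpha>"
    by (simp add: power_numeral_reduce mult_ac)
  have "4 * ?M * K ^ 3 * ?\<delta> powr ?\<alpha> \<le> 4 * ?M * K ^ 4 * ?\<delta> powr ?\<alpha>"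
    using M K by (intro mult_right_mono mult_left_mono power_increasing) auto
  with bernoulli_gap_mult_powr_holder[OF assms] have scaled:
    "\<bar>bernoulli_gap p (inner x z) * norm z powr (\<epsilon> - 2)
      - bernoulli_gap p (inner x z') * norm z' powr (\<epsilon> - 2)\<bar> \<le> 4 * ?M * K ^ 4 * ?\<delta> powr ?\<alpha>"
    by linarith
  have min_diff: "\<bar>min a b - min a' b'\<bar> \<le> \<bar>a - a'\<bar> + \<bar>b - b'\<bar>" for a b a' b' :: real
    by (auto simp: min_def)
  have "0 < 1 + inner x z" "0 < 1 + inner x z'" using assms(4,5) c by auto
  then have "\<bar>Ifun p \<epsilon> z x - Ifun p \<epsilon> z' x\<bar>
      \<le> \<bar>bernoulli_gap p (inner x z) * norm z powr (\<epsilon> - 2)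
        - bernoulli_gap p (inner x z') * norm z' powr (\<epsilon> - 2)\<bar>
      + \<bar>bernoulli_gap p (inner x z) - bernoulli_gap p (inner x z')\<bar>"
    by (simp add: Ifun_eq_min[OF p] min_diff)
  also have "\<dots> \<le> 4 * ?M * K ^ 4 * ?\<delta> powr ?\<alpha> + 2 * ?M * K ^ 4 * ?\<delta> powr ?\<alpha>"
    using scaled gap by (rule add_mono)
  finally show ?thesis by (simp add: algebra_simps)
qed

end

lemma norm_le_if_mem_Oset:
  assumes "cball 0 (1 / \<kappa>) \<subseteq> convex hull (S \<union> {0})" "0 < \<kappa>" "x \<in> Oset S n"
  shows "norm x \<le> \<kappa>"
proof -
  have "-1 \<le> inner x z" if "z \<in> S" for z
  proof -
    have "-1 + 1 / real n \<le> inner x z" using assms(3) that by (simp add: Oset_def)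
    moreover have "0 \<le> 1 / real n" by simp
    ultimately show ?thesis by linarith
  qed
  then have "1 / \<kappa> * norm x \<le> 1"
    using assms(1,2) by (intro norm_le_of_cball_subset_hull) auto
  then show ?thesis using assms(2) by (simp add: field_simps)
qed

lemma Ifun_estimates_on_Oset:
  fixes S :: "'a::euclidean_space set"
  assumes p: "p < 1" "p \<noteq> 0" and \<epsilon>: "0 < \<epsilon>" "\<epsilon> \<le> 2" and "1 \<le> n" "0 < \<kappa>"
    and S: "cball 0 (1 / \<kappa>) \<subseteq> convex hull (S \<union> {0})" "convex hull (S \<union> {0}) \<subseteq> cball 0 \<kappa>"
    and xz: "x \<in> Oset S n" "x' \<in> Oset S n" "z \<in> S" "z' \<in> S"
  defines "C \<equiv> 6 * ((1 - p) * (1 / real n) powr (p - 2)) * max 1 \<kappa> ^ 4"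
  shows "\<bar>Ifun p \<epsilon> z x - Ifun p \<epsilon> z' x\<bar> \<le> C * dist z z' powr min \<epsilon> 1"
    and "\<bar>Ifun p \<epsilon> z x - Ifun p \<epsilon> z x'\<bar> \<le> C * dist x x'"
    and "\<bar>Ifun p \<epsilon> z x\<bar> \<le> C"
proof -
  define K c where "K = max 1 \<kappa>" and "c = 1 / real n"
  define M where "M = (1 - p) * c powr (p - 2)"
  have K: "1 \<le> K" and c: "0 < c" "c \<le> 1" and C: "C = 6 * M * K ^ 4"
    using assms by (auto simp: K_def c_def M_def C_def)
  have "M * K ^ 3 \<le> M * K ^ 4" "0 \<le> M * K ^ 4"
    using mult_left_mono[OF power_increasing[of 3 4 K]] p K by (auto simp: M_def)
  then have MK: "M * K ^ 3 \<le> C" "M * K ^ 4 \<le> C" unfolding C by linarith+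
  have nz: "norm w \<le> K" if "w \<in> S" for w
    using that S(2) hull_subset[of "S \<union> {0}" convex] by (force simp: K_def)
  have nx: "norm w \<le> K" if "w \<in> Oset S n" for w
    using norm_le_if_mem_Oset[OF S(1) \<open>0 < \<kappa>\<close> that] by (simp add: K_def)
  have u: "c \<le> 1 + inner w v" if "w \<in> Oset S n" "v \<in> S" for w v
    using that by (auto simp: Oset_def c_def)
  note hyps = p c \<epsilon> K
  show "\<bar>Ifun p \<epsilon> z x - Ifun p \<epsilon> z' x\<bar> \<le> C * dist z z' powr min \<epsilon> 1"
    using Ifun_holder_z[OF hyps nx[OF xz(1)] nz[OF xz(3)] nz[OF xz(4)] u[OF xz(1,3)] u[OF xz(1,4)]]
    unfolding C M_def .
  show "\<bar>Ifun p \<epsilon> z x - Ifun p \<epsilon> z x'\<bar> \<le> C * dist x x'"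
    using Ifun_lipschitz_x[OF hyps nx[OF xz(1)] nx[OF xz(2)] nz[OF xz(3)] u[OF xz(1,3)] u[OF xz(2,3)],
        folded M_def]
      mult_right_mono[OF MK(1) zero_le_dist, of x x'] by linarith
  show "\<bar>Ifun p \<epsilon> z x\<bar> \<le> C"
    using Ifun_abs_le[OF hyps nx[OF xz(1)] nz[OF xz(3)] u[OF xz(1,3)], folded M_def] MK(2)
    by linarith
qed

theorem lemmaC1:
  fixes p \<epsilon> \<kappa> :: real and n :: nat
  assumes "p < 1" "p \<noteq> 0" "0 < \<epsilon>" "\<epsilon> \<le> 2" "n \<ge> 1" "\<kappa> > 0"
  shows "\<exists>C::real. \<forall>S :: 'a::euclidean_space set.
     closed S \<and> cball 0 (1 / \<kappa>) \<subseteq> convex hull (S \<union> {0})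
       \<and> convex hull (S \<union> {0}) \<subseteq> cball 0 \<kappa> \<longrightarrow>
       continuous_on (S \<times> Oset S n) (\<lambda>(z, x). Ifun p \<epsilon> z x)
     \<and> (\<forall>x\<in>Oset S n. \<forall>z\<in>S. \<forall>z'\<in>S. z \<noteq> z' \<longrightarrow>
           \<bar>Ifun p \<epsilon> z x - Ifun p \<epsilon> z' x\<bar> \<le> C * dist z z' powr min \<epsilon> 1)
     \<and> (\<forall>z\<in>S. \<forall>x\<in>Oset S n. \<forall>x'\<in>Oset S n. x \<noteq> x' \<longrightarrow>
           \<bar>Ifun p \<epsilon> z x - Ifun p \<epsilon> z x'\<bar> \<le> C * dist x x')
     \<and> (\<forall>z\<in>S. \<forall>x\<in>Oset S n. \<bar>Ifun p \<epsilon> z x\<bar> \<le> C)"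
proof -
  define C where "C = 6 * ((1 - p) * (1 / real n) powr (p - 2)) * max 1 \<kappa> ^ 4"
  note estimates = Ifun_estimates_on_Oset[OF assms, folded C_def]
  have "continuous_on (S \<times> Oset S n) (\<lambda>(z, x). Ifun p \<epsilon> z x)"
    if "cball 0 (1 / \<kappa>) \<subseteq> convex hull (S \<union> {0})" "convex hull (S \<union> {0}) \<subseteq> cball 0 \<kappa>"
    for S :: "'a set"
    using estimates(1,2)[OF that] assms(3)
    by (intro continuous_on_Times_holder_lipschitz[where C = C and \<alpha> = "min \<epsilon> 1"]) auto
  then show ?thesis
    using estimates by (intro exI[of _ C]) blast
qed

end
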